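(* Let $A,B$ be positive definite matrices with $mI\le A,B\le MI$ for some scalars $0<m<M$, put $h=M/m$, and let $\Phi$ be a unital positive linear map between matrix algebras. Then \[K(h,p)^{1/p}\Big(\mathrm{Tr}\big[\Phi(A^p)^{1/p}\big]+\mathrm{Tr}\big[\Phi(B^p)^{1/p}\big]\Big)\le\mathrm{Tr}\big[\Phi((A+B)^p)^{1/p}\big]\le K(h,p)^{-1/p}\Big(\mathrm{Tr}\big[\Phi(A^p)^{1/p}\big]+\mathrm{Tr}\big[\Phi(B^p)^{1/p}\big]\Big)\] for all $p<0$ and all $0<p\le1$, and \[K(h,p)^{-1/p}\Big(\mathrm{Tr}\big[\Phi(A^p)^{1/p}\big]+\mathrm{Tr}\big[\Phi(B^p)^{1/p}\big]\Big)\le\mathrm{Tr}\big[\Phi((A+B)^p)^{1/p}\big]\le K(h,p)^{1/p}\Big(\mathrm{Tr}\big[\Phi(A^p)^{1/p}\big]+\mathrm{Tr}\big[\Phi(B^p)^{1/p}\big]\Big)\] for all $p\ge1$.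
   Context: $\mathrm{Tr}$ is the trace, $\le$ the Löwner order; unital positive linear map: preserves positive semidefiniteness and $\Phi(I)=I$. Generalized Kantorovich constant: $K(h,p)=\frac{h^p-h}{(p-1)(h-1)}\Big(\frac{p-1}{p}\frac{h^p-1}{h^p-h}\Big)^p$ (with $K(h,1)=1$ by continuity). *)

theory Defs
  imports Complex_Main "Jordan_Normal_Form.Matrix"
begin

definition adj :: "complex mat \<Rightarrow> complex mat" where
  "adj A = mat (dim_col A) (dim_row A) (\<lambda>(i,j). cnj (A $$ (j,i)))"

definition hermitian :: "complex mat \<Rightarrow> bool" where
  "hermitian A \<longleftrightarrow> A \<in> carrier_mat (dim_row A) (dim_row A) \<and> adj A = A"

definition psd :: "complex mat \<Rightarrow> bool" where
  "psd A \<longleftrightarrow> hermitian A \<and>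
     (\<forall>v \<in> carrier_vec (dim_row A). 0 \<le> Re (conjugate v \<bullet> (A *\<^sub>v v)))"

definition pd :: "complex mat \<Rightarrow> bool" where
  "pd A \<longleftrightarrow> hermitian A \<and>
     (\<forall>v \<in> carrier_vec (dim_row A). v \<noteq> 0\<^sub>v (dim_row A) \<longrightarrow> 0 < Re (conjugate v \<bullet> (A *\<^sub>v v)))"

definition loewner_le :: "complex mat \<Rightarrow> complex mat \<Rightarrow> bool" where
  "loewner_le A B \<longleftrightarrow> dim_row A = dim_row B \<and> dim_col A = dim_col B \<and> psd (B - A)"

definition unitary :: "nat \<Rightarrow> complex mat \<Rightarrow> bool" where
  "unitary n U \<longleftrightarrow> U \<in> carrier_mat n n \<and> adj U * U = 1\<^sub>m n"

definition mat_powr :: "complex mat \<Rightarrow> real \<Rightarrow> complex mat" where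
  "mat_powr A p = (SOME B. \<exists>U lam. unitary (dim_row A) U \<and>
      A = U * mat_diag (dim_row A) (\<lambda>i. complex_of_real (lam i)) * adj U \<and>
      B = U * mat_diag (dim_row A) (\<lambda>i. complex_of_real (lam i powr p)) * adj U)"

definition unital_positive_linear_map :: "nat \<Rightarrow> nat \<Rightarrow> (complex mat \<Rightarrow> complex mat) \<Rightarrow> bool" where
  "unital_positive_linear_map n k \<Phi> \<longleftrightarrow>
     (\<forall>A \<in> carrier_mat n n. \<Phi> A \<in> carrier_mat k k) \<and>
     (\<forall>A \<in> carrier_mat n n. \<forall>B \<in> carrier_mat n n. \<Phi> (A + B) = \<Phi> A + \<Phi> B) \<and>
     (\<forall>A \<in> carrier_mat n n. \<forall>c. \<Phi> (c \<cdot>\<^sub>m A) = c \<cdot>\<^sub>m \<Phi> A) \<and>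
     (\<forall>A \<in> carrier_mat n n. psd A \<longrightarrow> psd (\<Phi> A)) \<and>
     \<Phi> (1\<^sub>m n) = 1\<^sub>m k"

definition kantorovich :: "real \<Rightarrow> real \<Rightarrow> real" where
  "kantorovich h p = (if p = 1 then 1 else
     (h powr p - h) / ((p - 1) * (h - 1)) *
     (((p - 1) / p) * ((h powr p - 1) / (h powr p - h))) powr p)"

definition mtrace :: "complex mat \<Rightarrow> complex" where
  "mtrace A = (\<Sum>i<dim_row A. A $$ (i,i))"

definition trPhi :: "(complex mat \<Rightarrow> complex mat) \<Rightarrow> complex mat \<Rightarrow> real \<Rightarrow> real" where
  "trPhi \<Phi> X p = Re (mtrace (mat_powr (\<Phi> (mat_powr X p)) (1 / p)))"

end

(*
  Diagonalize C = sum_i lam_i u_i u_i^H and Phi(C^p) = sum_j mu_j v_j v_j^H.  The numbers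
  w_ji = <v_j, Phi(u_i u_i^H) v_j> form a row-stochastic matrix (Phi is positive and unital), and
  mu_j = sum_i w_ji lam_i^p, Tr Phi(C) = sum_j sum_i w_ji lam_i.  Hence Tr[Phi(C^p)^(1/p)] is a sum of
  weighted power means M_p of the eigenvalues of C, and Tr Phi(C) is the sum of the corresponding
  arithmetic means M_1.  If the eigenvalues lie in [a, a h], Jensen's inequality and its converse
  (the chord of x^p on [a, a h] stays within the factor K(h,p) of t^p) give
  M_1 <= M_p <= K(h,p)^(1/p) M_1 for p >= 1, and the reversed bounds for p < 0 or 0 < p <= 1.
  Applying this to A, B and A + B, whose spectra lie in [m, M] and [2m, 2M] (same ratio h), and
  using additivity of Tr Phi yields the theorem.
*)
theory Submission
  imports Defs "Jordan_Normal_Form.Spectral_Radius" "HOL-Analysis.Convex"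
begin

section \<open>Convexity of powers and the Kantorovich constant\<close>

lemma powr_convex_on:
  fixes p :: real
  assumes "p \<le> 0 \<or> 1 \<le> p"
  shows "convex_on {0<..} (\<lambda>x. x powr p)"
proof (rule f''_ge0_imp_convex)
  fix x :: real assume "x \<in> {0<..}"
  then show "((\<lambda>x. x powr p) has_real_derivative p * x powr (p - 1)) (at x)"
    and "((\<lambda>x. p * x powr (p - 1)) has_real_derivative p * ((p - 1) * x powr (p - 1 - 1))) (at x)"
    by (auto intro!: derivative_eq_intros)
  have "0 \<le> p * (p - 1)" using assms by (auto simp: mult_nonpos_nonpos)
  then show "0 \<le> p * ((p - 1) * x powr (p - 1 - 1))" by (simp add: mult.assoc[symmetric])
qed simp

lemma powr_concave_on:
  fixes p :: real
  assumes "0 \<le> p" "p \<le> 1"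
  shows "concave_on {0<..} (\<lambda>x. x powr p)"
proof (rule f''_le0_imp_concave)
  fix x :: real assume "x \<in> {0<..}"
  then show "((\<lambda>x. x powr p) has_real_derivative p * x powr (p - 1)) (at x)"
    and "((\<lambda>x. p * x powr (p - 1)) has_real_derivative p * ((p - 1) * x powr (p - 1 - 1))) (at x)"
    by (auto intro!: derivative_eq_intros)
  have "p * (p - 1) \<le> 0" using assms by (simp add: mult_nonneg_nonpos)
  then show "p * ((p - 1) * x powr (p - 1 - 1)) \<le> 0"
    by (simp add: mult.assoc[symmetric] mult_nonpos_nonneg)
qed simp

lemma Bernoulli_inequality_powr:
  fixes p u :: real
  assumes p: "p \<le> 0 \<or> 1 \<le> p" and u: "0 < u"
  shows "1 + p * (u - 1) \<le> u powr p"
proof (cases "p < 0")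
  case True
  have "u powr (- p / (1 - p)) * (u powr p) powr (1 / (1 - p)) \<le> - p / (1 - p) * u + 1 / (1 - p) * u powr p"
    using True u by (intro Youngs_inequality_0) (auto simp: field_simps)
  moreover have "u powr (- p / (1 - p)) * (u powr p) powr (1 / (1 - p)) = 1"
    using u by (simp add: powr_powr powr_add[symmetric])
  moreover have "- p / (1 - p) * u + 1 / (1 - p) * u powr p = (- p * u + u powr p) / (1 - p)"
    by (simp add: add_divide_distrib diff_divide_distrib)
  ultimately have "1 - p \<le> - p * u + u powr p" using True by (simp add: le_divide_eq)
  then show ?thesis by (simp add: algebra_simps)
next
  case False
  show ?thesis
  proof (cases "p = 0")
    case False
    with \<open>\<not> p < 0\<close> p have p1: "1 \<le> p" by auto
    have "(u powr p) powr (1 / p) * 1 powr (1 - 1 / p) \<le> 1 / p * u powr p + (1 - 1 / p) * 1"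
      using p1 u by (intro Youngs_inequality_0) auto
    moreover have "(u powr p) powr (1 / p) = u" using p1 u by (simp add: powr_powr)
    moreover have "1 / p * u powr p + (1 - 1 / p) * 1 = (u powr p + p - 1) / p"
      using p1 by (simp add: field_simps)
    ultimately have "u \<le> (u powr p + p - 1) / p" by simp
    then have "p * u \<le> u powr p + p - 1" using p1 by (simp add: le_divide_eq mult.commute)
    then show ?thesis by (simp add: algebra_simps)
  qed (use u in simp)
qed

lemma Bernoulli_inequality_powr_reverse:
  fixes p u :: real
  assumes "0 \<le> p" "p \<le> 1" "0 < u"
  shows "u powr p \<le> 1 + p * (u - 1)"
  using Youngs_inequality_0[of p "1 - p" u 1] assms by (simp add: algebra_simps)

lemma convex_on_le_chord:
  fixes f :: "real \<Rightarrow> real"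
  assumes f: "convex_on {a..b} f" and ab: "a < b" and x: "x \<in> {a..b}"
  shows "f x \<le> ((b - x) * f a + (x - a) * f b) / (b - a)"
proof -
  define t where "t = (x - a) / (b - a)"
  have t: "0 \<le> t" "t \<le> 1" using ab x unfolding t_def by auto
  have "t * (b - a) = x - a" using ab unfolding t_def by simp
  then have "(1 - t) *\<^sub>R a + t *\<^sub>R b = x" by (simp add: algebra_simps)
  moreover have "1 - t = (b - x) / (b - a)" using ab unfolding t_def by (simp add: field_simps)
  then have "(1 - t) * f a + t * f b = ((b - x) * f a + (x - a) * f b) / (b - a)"
    unfolding t_def by (simp add: add_divide_distrib)
  moreover have "f ((1 - t) *\<^sub>R a + t *\<^sub>R b) \<le> (1 - t) * f a + t * f b"
    by (rule convex_onD[OF f t]) (use ab in auto)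
  ultimately show ?thesis by simp
qed

lemma sum_weighted_chord:
  fixes w x :: "'i \<Rightarrow> real"
  assumes "sum w I = 1" "a \<noteq> b"
  shows "(\<Sum>i\<in>I. w i * (((b - x i) * fa + (x i - a) * fb) / (b - a)))
       = ((b - (\<Sum>i\<in>I. w i * x i)) * fa + ((\<Sum>i\<in>I. w i * x i) - a) * fb) / (b - a)"
proof -
  have "(\<Sum>i\<in>I. w i * (((b - x i) * fa + (x i - a) * fb) / (b - a)))
      = ((b * sum w I - (\<Sum>i\<in>I. w i * x i)) * fa + ((\<Sum>i\<in>I. w i * x i) - a * sum w I) * fb) / (b - a)"
    by (simp add: sum_divide_distrib[symmetric] sum_distrib_left sum_distrib_right sum_subtractf
        sum.distrib algebra_simps)
  then show ?thesis using assms(1) by simp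
qed

lemma convex_on_sum_le_chord:
  fixes f :: "real \<Rightarrow> real" and w x :: "'i \<Rightarrow> real"
  assumes f: "convex_on {a..b} f" and ab: "a < b"
    and x: "\<And>i. i \<in> I \<Longrightarrow> x i \<in> {a..b}"
    and w: "\<And>i. i \<in> I \<Longrightarrow> 0 \<le> w i" "sum w I = 1"
  shows "(\<Sum>i\<in>I. w i * f (x i))
       \<le> ((b - (\<Sum>i\<in>I. w i * x i)) * f a + ((\<Sum>i\<in>I. w i * x i) - a) * f b) / (b - a)"
proof -
  have "(\<Sum>i\<in>I. w i * f (x i)) \<le> (\<Sum>i\<in>I. w i * (((b - x i) * f a + (x i - a) * f b) / (b - a)))"
    by (intro sum_mono mult_left_mono convex_on_le_chord[OF f ab x] w)
  also have "\<dots> = ((b - (\<Sum>i\<in>I. w i * x i)) * f a + ((\<Sum>i\<in>I. w i * x i) - a) * f b) / (b - a)"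
    using sum_weighted_chord[OF w(2)] ab by simp
  finally show ?thesis .
qed

lemma concave_on_sum_ge_chord:
  fixes f :: "real \<Rightarrow> real" and w x :: "'i \<Rightarrow> real"
  assumes f: "concave_on {a..b} f" and ab: "a < b"
    and x: "\<And>i. i \<in> I \<Longrightarrow> x i \<in> {a..b}"
    and w: "\<And>i. i \<in> I \<Longrightarrow> 0 \<le> w i" "sum w I = 1"
  shows "((b - (\<Sum>i\<in>I. w i * x i)) * f a + ((\<Sum>i\<in>I. w i * x i) - a) * f b) / (b - a)
       \<le> (\<Sum>i\<in>I. w i * f (x i))"
proof -
  have "convex_on {a..b} (\<lambda>x. - f x)" using f by (simp add: concave_on_def)
  from convex_on_sum_le_chord[where f = "\<lambda>x. - f x" and x = x and w = w and I = I, OF this ab x w] show ?thesis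
    using ab by (simp add: sum_negf field_simps)
qed

lemma powr_diff_mult_diff_pos:
  fixes h p q :: real
  assumes "1 < h" "p \<noteq> q"
  shows "0 < (h powr p - h powr q) * (p - q)"
proof (cases "p < q")
  case True
  then have "h powr p < h powr q" using assms(1) by simp
  with True show ?thesis by (simp add: mult_neg_neg)
next
  case False
  then have "q < p" using assms(2) by simp
  then have "h powr q < h powr p" using assms(1) by simp
  with \<open>q < p\<close> show ?thesis by simp
qed

text \<open>The chord of \<open>x \<mapsto> x powr p\<close> through \<open>(1, 1)\<close> and \<open>(h, h powr p)\<close>.\<close>

definition powr_chord :: "real \<Rightarrow> real \<Rightarrow> real \<Rightarrow> real" where
  "powr_chord h p t = (h - t + (t - 1) * h powr p) / (h - 1)"

text \<open>\<open>K(h,p)\<close> is the extremal ratio of this chord to \<open>t powr p\<close>: the chord is \<open>c\<close> times the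
  tangent of \<open>x powr p\<close> at \<open>1\<close>, evaluated at \<open>r t\<close>, while \<open>K(h,p) = c r powr p\<close>; Bernoulli's
  inequality then compares the two.\<close>

lemma kantorovich_factorization:
  fixes h p :: real
  assumes h: "1 < h" and p: "p \<noteq> 0" "p \<noteq> 1"
  obtains c r where "0 < c" "0 < r" "kantorovich h p = c * r powr p"
    "\<And>t. powr_chord h p t = c * (1 + p * (r * t - 1))"
proof -
  define c where "c = (h powr p - h) / ((p - 1) * (h - 1))"
  define r where "r = (p - 1) / p * ((h powr p - 1) / (h powr p - h))"
  have "0 < (h powr p - h powr 1) * (p - 1)" by (rule powr_diff_mult_diff_pos[OF h p(2)])
  then have sgn_h: "0 < (h powr p - h) * (p - 1)" using h by simp
  have "0 < (h powr p - h powr 0) * (p - 0)" by (rule powr_diff_mult_diff_pos[OF h p(1)])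
  then have sgn_1: "0 < (h powr p - 1) * p" using h by simp
  have "0 < (h powr p - h) / (p - 1)" using sgn_h by (metis zero_less_divide_iff zero_less_mult_iff)
  then have "0 < (h powr p - h) / (p - 1) / (h - 1)" by (rule divide_pos_pos) (use h in simp)
  then have c_pos: "0 < c" unfolding c_def by (simp only: divide_divide_eq_left)
  have "0 < (p - 1) / (h powr p - h)" "0 < (h powr p - 1) / p"
    using sgn_h sgn_1 by (metis zero_less_divide_iff zero_less_mult_iff mult.commute)+
  moreover have "r = (p - 1) / (h powr p - h) * ((h powr p - 1) / p)"
    unfolding r_def by (simp add: times_divide_times_eq ac_simps)
  ultimately have r_pos: "0 < r" by (metis mult_pos_pos)
  have K: "kantorovich h p = c * r powr p" unfolding kantorovich_def c_def r_def using p by simp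
  have "h powr p \<noteq> h" "h \<noteq> 1" using sgn_h h by auto
  then have cpr: "c * p * r = (h powr p - 1) / (h - 1)"
    unfolding c_def r_def using p by (simp add: divide_simps)
  have "(h powr p - h) * (1 - p) = (h - h powr p) * (p - 1)" by (simp add: algebra_simps)
  then have c1p: "c * (1 - p) = (h - h powr p) / (h - 1)"
    unfolding c_def using p \<open>h \<noteq> 1\<close> by (simp add: divide_simps)
  have "c * (1 + p * (r * t - 1)) = powr_chord h p t" for t
  proof -
    have "c * (1 + p * (r * t - 1)) = c * (1 - p) + c * p * r * t" by (simp add: algebra_simps)
    also have "\<dots> = ((h - h powr p) + (h powr p - 1) * t) / (h - 1)"
      unfolding c1p cpr by (simp add: add_divide_distrib)
    also have "(h - h powr p) + (h powr p - 1) * t = h - t + (t - 1) * h powr p"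
      by (simp add: algebra_simps)
    finally show ?thesis unfolding powr_chord_def .
  qed
  with c_pos r_pos K show ?thesis by (intro that) auto
qed

lemma kantorovich_pos:
  fixes h p :: real
  assumes h: "1 < h" and p: "p \<noteq> 0"
  shows "0 < kantorovich h p"
proof (cases "p = 1")
  case True
  then show ?thesis by (simp add: kantorovich_def)
next
  case False
  obtain c r where "0 < c" "0 < r" "kantorovich h p = c * r powr p"
    using kantorovich_factorization[OF h p False] by blast
  then show ?thesis by simp
qed

lemma powr_chord_exponent_one:
  fixes h t :: real
  assumes "1 < h"
  shows "powr_chord h 1 t = t"
proof -
  have "h - t + (t - 1) * h powr 1 = t * (h - 1)" using assms by (simp add: algebra_simps)
  then show ?thesis using assms unfolding powr_chord_def by simp
qed

lemma powr_chord_le_kantorovich: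
  fixes h p t :: real
  assumes h: "1 < h" and t: "0 < t" and p: "p < 0 \<or> 1 \<le> p"
  shows "powr_chord h p t \<le> kantorovich h p * t powr p"
proof (cases "p = 1")
  case True
  then show ?thesis using powr_chord_exponent_one[OF h] t by (simp add: kantorovich_def)
next
  case False
  have p0: "p \<noteq> 0" using p by auto
  obtain c r where c: "0 < c" and r: "0 < r" and K: "kantorovich h p = c * r powr p"
    and chord: "\<And>t. powr_chord h p t = c * (1 + p * (r * t - 1))"
    using kantorovich_factorization[OF h p0 False] by blast
  have "c * (1 + p * (r * t - 1)) \<le> c * (r * t) powr p"
    using Bernoulli_inequality_powr[of p "r * t"] p r t c by (intro mult_left_mono) auto
  then show ?thesis unfolding chord K using r t by (simp add: powr_mult mult.assoc)
qed

lemma kantorovich_le_powr_chord: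
  fixes h p t :: real
  assumes h: "1 < h" and t: "0 < t" and p: "0 < p" "p \<le> 1"
  shows "kantorovich h p * t powr p \<le> powr_chord h p t"
proof (cases "p = 1")
  case True
  then show ?thesis using powr_chord_exponent_one[OF h] t by (simp add: kantorovich_def)
next
  case False
  have p0: "p \<noteq> 0" using p by auto
  obtain c r where c: "0 < c" and r: "0 < r" and K: "kantorovich h p = c * r powr p"
    and chord: "\<And>t. powr_chord h p t = c * (1 + p * (r * t - 1))"
    using kantorovich_factorization[OF h p0 False] by blast
  have "c * (r * t) powr p \<le> c * (1 + p * (r * t - 1))"
    using Bernoulli_inequality_powr_reverse[of p "r * t"] p r t c by (intro mult_left_mono) auto
  then show ?thesis unfolding chord K using r t by (simp add: powr_mult mult.assoc)
qed

section \<open>Weighted power means\<close>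

lemma sum_weights_finite_nonempty:
  assumes "sum w I = (1::real)"
  shows "finite I" "I \<noteq> {}"
  using assms by (auto intro: ccontr)

lemma weighted_mean_in_interval:
  fixes w x :: "'i \<Rightarrow> real"
  assumes x: "\<And>i. i \<in> I \<Longrightarrow> x i \<in> {a..b}"
    and w: "\<And>i. i \<in> I \<Longrightarrow> 0 \<le> w i" "sum w I = 1"
  shows "(\<Sum>i\<in>I. w i * x i) \<in> {a..b}"
proof -
  have "(\<Sum>i\<in>I. w i * a) \<le> (\<Sum>i\<in>I. w i * x i)" "(\<Sum>i\<in>I. w i * x i) \<le> (\<Sum>i\<in>I. w i * b)"
    using x w by (auto intro!: sum_mono mult_left_mono)
  then show ?thesis using w(2) by (simp add: sum_distrib_right[symmetric])
qed

lemma powr_chord_rescale: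
  fixes a h p t :: real
  assumes "0 < a" "1 < h"
  shows "((a * h - t) * a powr p + (t - a) * (a * h) powr p) / (a * h - a)
       = a powr p * powr_chord h p (t / a)"
proof -
  have "a * h - a = a * (h - 1)" "(a * h) powr p = a powr p * h powr p"
    using assms by (simp_all add: algebra_simps powr_mult)
  then show ?thesis using assms unfolding powr_chord_def by (simp add: field_simps)
qed

lemma sum_powr_kantorovich_convex:
  fixes w x :: "'i \<Rightarrow> real" and a h p :: real
  assumes a: "0 < a" and h: "1 < h" and p: "p < 0 \<or> 1 \<le> p"
    and x: "\<And>i. i \<in> I \<Longrightarrow> x i \<in> {a..a * h}"
    and w: "\<And>i. i \<in> I \<Longrightarrow> 0 \<le> w i" "sum w I = 1"
  shows "(\<Sum>i\<in>I. w i * x i) powr p \<le> (\<Sum>i\<in>I. w i * x i powr p)"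
    and "(\<Sum>i\<in>I. w i * x i powr p) \<le> kantorovich h p * (\<Sum>i\<in>I. w i * x i) powr p"
proof -
  define t where "t = (\<Sum>i\<in>I. w i * x i)"
  have t: "t \<in> {a..a * h}" unfolding t_def by (rule weighted_mean_in_interval[OF x w])
  have x_pos: "x i \<in> {0<..}" if "i \<in> I" for i using x[OF that] a by simp
  have cvx: "convex_on {0<..} (\<lambda>x. x powr p)" using powr_convex_on p by auto
  have "(\<Sum>i\<in>I. w i *\<^sub>R x i) powr p \<le> (\<Sum>i\<in>I. w i * x i powr p)"
    using sum_weights_finite_nonempty[OF w(2)] w x_pos by (intro convex_on_sum[OF _ _ cvx]) auto
  then show "t powr p \<le> (\<Sum>i\<in>I. w i * x i powr p)" unfolding t_def by simp
  have "(\<Sum>i\<in>I. w i * x i powr p)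
      \<le> ((a * h - t) * a powr p + (t - a) * (a * h) powr p) / (a * h - a)"
    unfolding t_def
    by (rule convex_on_sum_le_chord[OF convex_on_subset[OF cvx] _ x w]) (use a h in auto)
  also have "\<dots> = a powr p * powr_chord h p (t / a)"
    by (rule powr_chord_rescale[OF a h])
  also have "\<dots> \<le> a powr p * (kantorovich h p * (t / a) powr p)"
    using powr_chord_le_kantorovich[OF h _ p, of "t / a"] t a by (intro mult_left_mono) auto
  also have "\<dots> = kantorovich h p * t powr p" using a t by (simp add: powr_divide)
  finally show "(\<Sum>i\<in>I. w i * x i powr p) \<le> kantorovich h p * t powr p" .
qed

lemma sum_powr_kantorovich_concave:
  fixes w x :: "'i \<Rightarrow> real" and a h p :: real
  assumes a: "0 < a" and h: "1 < h" and p: "0 < p" "p \<le> 1"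
    and x: "\<And>i. i \<in> I \<Longrightarrow> x i \<in> {a..a * h}"
    and w: "\<And>i. i \<in> I \<Longrightarrow> 0 \<le> w i" "sum w I = 1"
  shows "(\<Sum>i\<in>I. w i * x i powr p) \<le> (\<Sum>i\<in>I. w i * x i) powr p"
    and "kantorovich h p * (\<Sum>i\<in>I. w i * x i) powr p \<le> (\<Sum>i\<in>I. w i * x i powr p)"
proof -
  define t where "t = (\<Sum>i\<in>I. w i * x i)"
  have t: "t \<in> {a..a * h}" unfolding t_def by (rule weighted_mean_in_interval[OF x w])
  have x_pos: "x i \<in> {0<..}" if "i \<in> I" for i using x[OF that] a by simp
  have ccv: "concave_on {0<..} (\<lambda>x. x powr p)" using powr_concave_on p by auto
  have "(\<Sum>i\<in>I. w i * x i powr p) \<le> (\<Sum>i\<in>I. w i *\<^sub>R x i) powr p"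
    using sum_weights_finite_nonempty[OF w(2)] w x_pos by (intro concave_on_sum[OF _ _ ccv]) auto
  then show "(\<Sum>i\<in>I. w i * x i powr p) \<le> t powr p" unfolding t_def by simp
  have ccv_ah: "concave_on {a..a * h} (\<lambda>x. x powr p)"
    unfolding concave_on_def
    by (rule convex_on_subset[OF ccv[unfolded concave_on_def]]) (use a in auto)
  have "kantorovich h p * t powr p = a powr p * (kantorovich h p * (t / a) powr p)"
    using a t by (simp add: powr_divide)
  also have "\<dots> \<le> a powr p * powr_chord h p (t / a)"
    using kantorovich_le_powr_chord[OF h _ p, of "t / a"] t a by (intro mult_left_mono) auto
  also have "\<dots> = ((a * h - t) * a powr p + (t - a) * (a * h) powr p) / (a * h - a)"
    by (rule powr_chord_rescale[OF a h, symmetric])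
  also have "\<dots> \<le> (\<Sum>i\<in>I. w i * x i powr p)"
    unfolding t_def
    by (rule concave_on_sum_ge_chord[OF ccv_ah _ x w]) (use a h in auto)
  finally show "kantorovich h p * t powr p \<le> (\<Sum>i\<in>I. w i * x i powr p)" .
qed

lemma powr_inverse_bounds:
  fixes L S U p :: real
  assumes L: "0 < L" and LS: "L \<le> S" and SU: "S \<le> U"
  shows "0 < p \<Longrightarrow> L powr (1 / p) \<le> S powr (1 / p) \<and> S powr (1 / p) \<le> U powr (1 / p)"
    and "p < 0 \<Longrightarrow> U powr (1 / p) \<le> S powr (1 / p) \<and> S powr (1 / p) \<le> L powr (1 / p)"
  using L LS SU powr_mono2[of "1 / p" L S] powr_mono2[of "1 / p" S U]
    powr_mono2'[of "1 / p" L S] powr_mono2'[of "1 / p" S U] by auto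

lemma power_mean_kantorovich_bounds:
  fixes w x :: "'i \<Rightarrow> real" and a h p :: real
  assumes a: "0 < a" and h: "1 < h"
    and x: "\<And>i. i \<in> I \<Longrightarrow> x i \<in> {a..a * h}"
    and w: "\<And>i. i \<in> I \<Longrightarrow> 0 \<le> w i" "sum w I = 1"
  defines "t \<equiv> \<Sum>i\<in>I. w i * x i" and "s \<equiv> (\<Sum>i\<in>I. w i * x i powr p) powr (1 / p)"
  shows "p < 0 \<or> 0 < p \<and> p \<le> 1 \<Longrightarrow> kantorovich h p powr (1 / p) * t \<le> s \<and> s \<le> t"
    and "1 \<le> p \<Longrightarrow> t \<le> s \<and> s \<le> kantorovich h p powr (1 / p) * t"
proof -
  define S where "S = (\<Sum>i\<in>I. w i * x i powr p)"
  define K where "K = kantorovich h p"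
  have "t \<in> {a..a * h}" unfolding t_def by (rule weighted_mean_in_interval[OF x w])
  then have t: "0 < t" using a by simp
  have K: "0 < K" if "p \<noteq> 0" unfolding K_def by (rule kantorovich_pos[OF h that])
  have roots: "(t powr p) powr (1 / p) = t" "(K * t powr p) powr (1 / p) = K powr (1 / p) * t"
    if "p \<noteq> 0" using t K[OF that] that by (simp_all add: powr_powr powr_mult)
  have convex: "t powr p \<le> S" "S \<le> K * t powr p" if "p < 0 \<or> 1 \<le> p"
    using sum_powr_kantorovich_convex[OF a h that x w] unfolding S_def K_def t_def by simp_all
  have concave: "K * t powr p \<le> S" "S \<le> t powr p" if "0 < p" "p \<le> 1"
    using sum_powr_kantorovich_concave[OF a h that x w] unfolding S_def K_def t_def by simp_all
  have tp: "0 < t powr p" using t by simp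
  show "kantorovich h p powr (1 / p) * t \<le> s \<and> s \<le> t" if p: "p < 0 \<or> 0 < p \<and> p \<le> 1"
  proof (cases "p < 0")
    case True
    from powr_inverse_bounds(2)[OF tp convex[OF disjI1[OF True]] True] show ?thesis
      using True roots unfolding s_def S_def[symmetric] K_def[symmetric] by simp
  next
    case False
    with p have p': "0 < p" "p \<le> 1" by auto
    have "0 < K * t powr p" using K tp p' by simp
    from powr_inverse_bounds(1)[OF this concave[OF p'] p'(1)] show ?thesis
      using p' roots unfolding s_def S_def[symmetric] K_def[symmetric] by simp
  qed
  show "t \<le> s \<and> s \<le> kantorovich h p powr (1 / p) * t" if p: "1 \<le> p"
  proof -
    have "0 < p" using p by simp
    from powr_inverse_bounds(1)[OF tp convex[OF disjI2[OF p]] this] show ?thesis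
      using p roots unfolding s_def S_def[symmetric] K_def[symmetric] by simp
  qed
qed

lemma ratio_bounds_add:
  fixes l u t1 t2 t T1 T2 :: real
  assumes lu: "0 < l" "0 < u"
    and b1: "l * T1 \<le> t1" "t1 \<le> u * T1" and b2: "l * T2 \<le> t2" "t2 \<le> u * T2"
    and b: "l * (T1 + T2) \<le> t" "t \<le> u * (T1 + T2)"
  shows "l / u * (t1 + t2) \<le> t" and "t \<le> u / l * (t1 + t2)"
proof -
  have "l / u * (t1 + t2) \<le> l / u * (u * (T1 + T2))"
    using b1 b2 lu by (intro mult_left_mono) (auto simp: algebra_simps)
  also have "\<dots> = l * (T1 + T2)" using lu by simp
  finally show "l / u * (t1 + t2) \<le> t" using b by linarith
  have "u * (T1 + T2) = u / l * (l * T1 + l * T2)" using lu by (simp add: field_simps)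
  also have "\<dots> \<le> u / l * (t1 + t2)" using b1 b2 lu by (intro mult_left_mono) auto
  finally show "t \<le> u / l * (t1 + t2)" using b by linarith
qed

section \<open>Conjugate transpose and unitary matrices\<close>

lemma conjugate_complex_eq_cnj [simp]: "conjugate (z::complex) = cnj z"
  by (simp add: conjugate_complex_def)

lemma adj_dim [simp]: "dim_row (adj A) = dim_col A" "dim_col (adj A) = dim_row A"
  unfolding adj_def by auto

lemma adj_index [simp]: "i < dim_col A \<Longrightarrow> j < dim_row A \<Longrightarrow> adj A $$ (i, j) = cnj (A $$ (j, i))"
  unfolding adj_def by auto

lemma adj_carrier [simp]: "A \<in> carrier_mat r c \<Longrightarrow> adj A \<in> carrier_mat c r"
  unfolding adj_def by auto

lemma adj_adj [simp]: "adj (adj A) = A"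
  by (rule eq_matI) (auto simp: adj_def)

lemma adj_mult:
  assumes "A \<in> carrier_mat r n" "B \<in> carrier_mat n c"
  shows "adj (A * B) = adj B * adj A"
  using assms by (intro eq_matI) (auto simp: scalar_prod_def cnj_sum mult.commute)

lemma adj_one [simp]: "adj (1\<^sub>m n) = 1\<^sub>m n"
  by (rule eq_matI) (auto simp: adj_def)

lemma adj_add:
  assumes "A \<in> carrier_mat r c" "B \<in> carrier_mat r c"
  shows "adj (A + B) = adj A + adj B"
  using assms by (intro eq_matI) auto

lemma adj_mat_diag_of_real [simp]:
  "adj (mat_diag n (\<lambda>i. complex_of_real (f i))) = mat_diag n (\<lambda>i. complex_of_real (f i))"
  by (intro eq_matI) (auto simp: mat_diag_def)

lemma adj_mult_mult_adj:
  assumes B: "B \<in> carrier_mat m n" and A: "A \<in> carrier_mat n n" and hA: "adj A = A"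
  shows "adj (B * A * adj B) = B * A * adj B"
proof -
  have "adj (B * A * adj B) = B * adj (B * A)"
    using adj_mult[of "B * A" m n "adj B" m] B A by simp
  also have "\<dots> = B * (A * adj B)" using adj_mult[OF B A] hA by simp
  finally show ?thesis using assoc_mult_mat[OF B A adj_carrier[OF B]] by simp
qed

lemma row_adj:
  assumes "W \<in> carrier_mat n m" "i < m"
  shows "row (adj W) i = conjugate (col W i)"
  using assms by (intro eq_vecI) auto

lemma adj_mult_mult_index:
  assumes W: "W \<in> carrier_mat n m" and X: "X \<in> carrier_mat n n" and i: "i < m" and j: "j < m"
  shows "(adj W * X * W) $$ (i, j) = conjugate (col W i) \<bullet> (X *\<^sub>v col W j)"
proof -
  have "adj W * X * W = adj W * (X * W)" using W X by (intro assoc_mult_mat) auto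
  also have "\<dots> $$ (i, j) = row (adj W) i \<bullet> col (X * W) j" using W X i j by (intro index_mult_mat) auto
  also have "col (X * W) j = X *\<^sub>v col W j" using W X j by (intro col_mult2) auto
  also have "row (adj W) i = conjugate (col W i)" using W i by (rule row_adj)
  finally show ?thesis .
qed

lemma adj_mult_index:
  assumes W: "W \<in> carrier_mat n m" and i: "i < m" and j: "j < m"
  shows "(adj W * W) $$ (i, j) = conjugate (col W i) \<bullet> col W j"
proof -
  have "(adj W * W) $$ (i, j) = row (adj W) i \<bullet> col W j" using W i j by (intro index_mult_mat) auto
  then show ?thesis using row_adj[OF W i] by simp
qed

lemma unitary_carrier: "unitary n U \<Longrightarrow> U \<in> carrier_mat n n"
  unfolding unitary_def by simp

lemma unitary_adj_mult: "unitary n U \<Longrightarrow> adj U * U = 1\<^sub>m n"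
  unfolding unitary_def by simp

lemma unitary_mult_adj:
  assumes "unitary n U"
  shows "U * adj U = 1\<^sub>m n"
  using mat_mult_left_right_inverse[OF adj_carrier unitary_carrier unitary_adj_mult] assms
  by (meson unitary_carrier)

lemma unitary_col_orthonormal:
  assumes "unitary n U" "i < n" "j < n"
  shows "conjugate (col U i) \<bullet> col U j = (if i = j then 1 else 0)"
  using adj_mult_index[OF unitary_carrier[OF assms(1)] assms(2,3)] unitary_adj_mult[OF assms(1)] assms(2,3)
  by simp

lemma unitary_mult:
  assumes uU: "unitary n U" and uV: "unitary n V"
  shows "unitary n (U * V)"
proof -
  have U: "U \<in> carrier_mat n n" and V: "V \<in> carrier_mat n n" using uU uV unitary_carrier by auto
  have "adj (U * V) * (U * V) = adj V * ((adj U * U) * V)"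
    using U V by (simp add: adj_mult assoc_mult_mat[of _ n n _ n _ n])
  also have "\<dots> = 1\<^sub>m n" using uU uV V by (simp add: unitary_adj_mult)
  finally show ?thesis using U V unfolding unitary_def by simp
qed

lemma adj_four_block_one:
  assumes "U \<in> carrier_mat n n"
  shows "adj (four_block_mat (1\<^sub>m 1) (0\<^sub>m 1 n) (0\<^sub>m n 1) U) = four_block_mat (1\<^sub>m 1) (0\<^sub>m 1 n) (0\<^sub>m n 1) (adj U)"
  using assms by (intro eq_matI) auto

lemma unitary_four_block_one:
  assumes uU: "unitary n U"
  shows "unitary (Suc n) (four_block_mat (1\<^sub>m 1) (0\<^sub>m 1 n) (0\<^sub>m n 1) U)"
proof -
  have U: "U \<in> carrier_mat n n" using uU by (rule unitary_carrier)
  have "four_block_mat (1\<^sub>m 1) (0\<^sub>m 1 n) (0\<^sub>m n 1) (adj U) * four_block_mat (1\<^sub>m 1) (0\<^sub>m 1 n) (0\<^sub>m n 1) U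
      = 1\<^sub>m (Suc n)"
    using U unitary_adj_mult[OF uU] four_block_one_mat[of 1 n]
    by (subst mult_four_block_mat[OF one_carrier_mat zero_carrier_mat zero_carrier_mat adj_carrier[OF U]
          one_carrier_mat zero_carrier_mat zero_carrier_mat U]) simp
  moreover have "four_block_mat (1\<^sub>m 1) (0\<^sub>m 1 n) (0\<^sub>m n 1) U \<in> carrier_mat (Suc n) (Suc n)"
    using four_block_carrier_mat[OF one_carrier_mat[of 1] U, of "0\<^sub>m 1 n" "0\<^sub>m n 1"] by simp
  ultimately show ?thesis unfolding unitary_def adj_four_block_one[OF U] by simp
qed

section \<open>Spectral theorem for Hermitian matrices\<close>

definition vec_normalize :: "complex vec \<Rightarrow> complex vec" where
  "vec_normalize v = complex_of_real (1 / sqrt (Re (v \<bullet>c v))) \<cdot>\<^sub>v v"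

lemma vec_normalize_carrier [simp]: "v \<in> carrier_vec n \<Longrightarrow> vec_normalize v \<in> carrier_vec n"
  unfolding vec_normalize_def by simp

lemma vec_normalize_cscalar_prod:
  assumes v: "v \<in> carrier_vec n" and w: "w \<in> carrier_vec n"
  shows "vec_normalize v \<bullet>c vec_normalize w
    = complex_of_real (1 / sqrt (Re (v \<bullet>c v)) * (1 / sqrt (Re (w \<bullet>c w)))) * (v \<bullet>c w)"
  unfolding vec_normalize_def using v w
  by (simp add: conjugate_smult_vec scalar_prod_smult_distrib smult_scalar_prod_distrib[of _ n])

lemma vec_normalize_unit:
  assumes v: "v \<in> carrier_vec n" "v \<noteq> 0\<^sub>v n"
  shows "vec_normalize v \<bullet>c vec_normalize v = 1"
proof -
  define r where "r = Re (v \<bullet>c v)"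
  have "v \<bullet>c v > 0" using v by simp
  then have r: "v \<bullet>c v = complex_of_real r" "0 < r"
    unfolding r_def by (auto simp: less_complex_def complex_eq_iff)
  have inv: "1 / sqrt r * (1 / sqrt r) = inverse r" using r(2) by (simp add: inverse_eq_divide)
  show ?thesis
    unfolding vec_normalize_cscalar_prod[OF v(1) v(1)] r_def[symmetric] inv r(1) using r(2) by simp
qed

lemma vec_normalize_of_unit: "v \<bullet>c v = 1 \<Longrightarrow> vec_normalize v = v"
  unfolding vec_normalize_def by simp

lemma unitary_of_orthonormal_cols:
  assumes ws: "set ws \<subseteq> carrier_vec n" "length ws = n"
    and orth: "\<And>i j. i < n \<Longrightarrow> j < n \<Longrightarrow> ws ! i \<bullet>c ws ! j = (if i = j then 1 else 0)"
  shows "unitary n (mat_of_cols n ws)"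
proof -
  define W where "W = mat_of_cols n ws"
  have W: "W \<in> carrier_mat n n" unfolding W_def using mat_of_cols_carrier(1)[of n ws] ws by simp
  have wsi: "ws ! i \<in> carrier_vec n" if "i < n" for i using ws that by auto
  have colW: "col W i = ws ! i" if "i < n" for i
    unfolding W_def using col_mat_of_cols[of i ws n] ws wsi that by simp
  have "adj W * W = 1\<^sub>m n"
  proof (rule eq_matI)
    fix i j assume "i < dim_row (1\<^sub>m n)" and "j < dim_col (1\<^sub>m n)"
    then have i: "i < n" and j: "j < n" by auto
    have "(adj W * W) $$ (i, j) = conjugate (ws ! i) \<bullet> ws ! j"
      using adj_mult_index[OF W i j] colW i j by simp
    also have "\<dots> = ws ! j \<bullet>c ws ! i" using conjugate_vec_sprod_comm[OF wsi[OF j] wsi[OF i]] by simp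
    finally show "(adj W * W) $$ (i, j) = 1\<^sub>m n $$ (i, j)" using orth[OF j i] i j by auto
  qed (use W in simp_all)
  then show ?thesis unfolding unitary_def W_def[symmetric] using W by simp
qed

lemma unitary_with_first_col:
  assumes u: "u \<in> carrier_vec n" and u1: "u \<bullet>c u = 1"
  obtains W where "unitary n W" "col W 0 = u"
proof -
  have u0: "u \<noteq> 0\<^sub>v n" using u1 by auto
  have n0: "0 < n" using u u1 by (cases n) (auto simp: scalar_prod_def)
  interpret cof_vec_space n "TYPE(complex)" .
  define b where "b = basis_completion u"
  from basis_completion[OF u u0, folded b_def]
  have dist_b: "distinct b" and indep: "\<not> lin_dep (set b)" and bc: "set b \<subseteq> carrier_vec n"
    and hdb: "hd b = u" and len_b: "length b = n" by auto
  from hdb len_b n0 obtain vs where bv: "b = u # vs" by (cases b) auto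
  define ws where "ws = gram_schmidt n b"
  from gram_schmidt_result[OF bc dist_b indep refl, folded ws_def]
  have orth: "corthogonal ws" and wsc: "set ws \<subseteq> carrier_vec n" and len: "length ws = n"
    by (auto simp: len_b)
  have "hd ws = u" unfolding ws_def bv using gram_schmidt_hd[OF u] by simp
  then have ws0: "ws ! 0 = u" using len n0 by (metis hd_conv_nth length_greater_0_conv)
  have wsi: "ws ! i \<in> carrier_vec n" if "i < n" for i using wsc len that by auto
  have wsi0: "ws ! i \<noteq> 0\<^sub>v n" if "i < n" for i
  proof
    assume "ws ! i = 0\<^sub>v n"
    then show False using corthogonalD[OF orth, of i i] len that by auto
  qed
  define ws' where "ws' = map vec_normalize ws"
  have ws'i: "ws' ! i = vec_normalize (ws ! i)" if "i < n" for i
    unfolding ws'_def using len that by simp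
  have "ws' ! i \<bullet>c ws' ! j = (if i = j then 1 else 0)" if "i < n" "j < n" for i j
  proof (cases "i = j")
    case True
    then show ?thesis using vec_normalize_unit[OF wsi wsi0] ws'i that by simp
  next
    case False
    then have "ws ! i \<bullet>c ws ! j = 0" using corthogonalD[OF orth, of i j] len that by auto
    then show ?thesis using False ws'i that vec_normalize_cscalar_prod[OF wsi wsi] by simp
  qed
  then have "unitary n (mat_of_cols n ws')"
    using wsi len unfolding ws'_def by (intro unitary_of_orthonormal_cols) (auto simp: in_set_conv_nth)
  moreover have "col (mat_of_cols n ws') 0 = u"
    using ws'i[OF n0] ws0 vec_normalize_of_unit[OF u1] n0 len wsi[OF n0] unfolding ws'_def
    by (simp add: col_mat_of_cols)
  ultimately show ?thesis by (rule that)
qed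

lemma unit_eigenvector_exists:
  fixes A :: "complex mat"
  assumes A: "A \<in> carrier_mat (Suc n) (Suc n)"
  obtains e u where "u \<in> carrier_vec (Suc n)" "u \<bullet>c u = 1" "A *\<^sub>v u = e \<cdot>\<^sub>v u"
proof -
  obtain e where "eigenvalue A e" using spectrum_non_empty[OF A] unfolding spectrum_def by auto
  then obtain v where "eigenvector A v e" unfolding eigenvalue_def by auto
  then have v: "v \<in> carrier_vec (Suc n)" "v \<noteq> 0\<^sub>v (Suc n)" and Av: "A *\<^sub>v v = e \<cdot>\<^sub>v v"
    unfolding eigenvector_def using A by auto
  have "A *\<^sub>v vec_normalize v = e \<cdot>\<^sub>v vec_normalize v"
    unfolding vec_normalize_def using A v Av by (simp add: mult_mat_vec smult_smult_assoc mult.commute)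
  with vec_normalize_carrier[OF v(1)] vec_normalize_unit[OF v] show ?thesis by (rule that)
qed

lemma hermitian_four_block_of_first_col:
  fixes A :: "complex mat"
  assumes A: "A \<in> carrier_mat (Suc n) (Suc n)" and hA: "adj A = A"
    and col0: "\<And>i. i < Suc n \<Longrightarrow> A $$ (i, 0) = (if i = 0 then e else 0)"
  obtains c A3 where "A3 \<in> carrier_mat n n" "adj A3 = A3"
    "A = four_block_mat (mat_diag 1 (\<lambda>_. complex_of_real c)) (0\<^sub>m 1 n) (0\<^sub>m n 1) A3"
proof -
  have herm: "A $$ (j, i) = cnj (A $$ (i, j))" if "i < Suc n" "j < Suc n" for i j
    using arg_cong[OF hA, of "\<lambda>X. X $$ (j, i)"] A that by simp
  define c where "c = Re e"
  have "e = cnj e" using herm[of 0 0] col0[of 0] by simp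
  then have e: "e = complex_of_real c" unfolding c_def by (simp add: complex_eq_iff)
  have row0: "A $$ (0, j) = (if j = 0 then e else 0)" if "j < Suc n" for j
    using herm[OF that, of 0] col0[OF that] e by auto
  define A3 where "A3 = mat n n (\<lambda>(i, j). A $$ (Suc i, Suc j))"
  have A3: "A3 \<in> carrier_mat n n" unfolding A3_def by simp
  moreover have "adj A3 = A3"
  proof (rule eq_matI)
    fix i j assume "i < dim_row A3" "j < dim_col A3"
    then have i: "i < n" and j: "j < n" using A3 by auto
    have "adj A3 $$ (i, j) = cnj (A $$ (Suc j, Suc i))" using i j A3 unfolding A3_def by simp
    also have "\<dots> = A $$ (Suc i, Suc j)" by (rule herm[symmetric]) (use i j in auto)
    finally show "adj A3 $$ (i, j) = A3 $$ (i, j)" unfolding A3_def using i j by simp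
  qed (use A3 in auto)
  moreover have "A = four_block_mat (mat_diag 1 (\<lambda>_. complex_of_real c)) (0\<^sub>m 1 n) (0\<^sub>m n 1) A3"
  proof (rule eq_matI)
    fix i j assume "i < dim_row (four_block_mat (mat_diag 1 (\<lambda>_. complex_of_real c)) (0\<^sub>m 1 n) (0\<^sub>m n 1) A3)"
      "j < dim_col (four_block_mat (mat_diag 1 (\<lambda>_. complex_of_real c)) (0\<^sub>m 1 n) (0\<^sub>m n 1) A3)"
    then have "i < Suc n" "j < Suc n" using A3 by (auto simp: mat_diag_def)
    then show "A $$ (i, j)
        = four_block_mat (mat_diag 1 (\<lambda>_. complex_of_real c)) (0\<^sub>m 1 n) (0\<^sub>m n 1) A3 $$ (i, j)"
      using col0 row0 e unfolding A3_def by (cases i; cases j) (auto simp: mat_diag_def)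
  qed (use A A3 in \<open>auto simp: mat_diag_def\<close>)
  ultimately show ?thesis using that by blast
qed

lemma hermitian_deflation:
  fixes A :: "complex mat"
  assumes A: "A \<in> carrier_mat (Suc n) (Suc n)" and hA: "adj A = A"
    and uW: "unitary (Suc n) W" and eig: "A *\<^sub>v col W 0 = e \<cdot>\<^sub>v col W 0"
  obtains c A3 where "A3 \<in> carrier_mat n n" "adj A3 = A3"
    "adj W * A * W = four_block_mat (mat_diag 1 (\<lambda>_. complex_of_real c)) (0\<^sub>m 1 n) (0\<^sub>m n 1) A3"
proof (rule hermitian_four_block_of_first_col)
  have W: "W \<in> carrier_mat (Suc n) (Suc n)" using uW by (rule unitary_carrier)
  show "adj W * A * W \<in> carrier_mat (Suc n) (Suc n)" using W A by auto
  show "adj (adj W * A * W) = adj W * A * W"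
    using adj_mult_mult_adj[OF adj_carrier[OF W] A hA] by simp
  show "(adj W * A * W) $$ (i, 0) = (if i = 0 then e else 0)" if i: "i < Suc n" for i
  proof -
    have "(adj W * A * W) $$ (i, 0) = conjugate (col W i) \<bullet> (e \<cdot>\<^sub>v col W 0)"
      using adj_mult_mult_index[OF W A i] eig by simp
    also have "\<dots> = e * (conjugate (col W i) \<bullet> col W 0)"
      by (rule scalar_prod_smult_distrib[of _ "Suc n"]) (use W in \<open>auto intro: carrier_vecI\<close>)
    finally show ?thesis using unitary_col_orthonormal[OF uW i, of 0] by simp
  qed
qed (rule that)

lemma mat_diag_Suc_four_block:
  "mat_diag (Suc n) f = four_block_mat (mat_diag 1 (\<lambda>_. f 0)) (0\<^sub>m 1 n) (0\<^sub>m n 1) (mat_diag n (\<lambda>i. f (Suc i)))"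
  by (rule eq_matI) (auto simp: mat_diag_def)

lemma four_block_one_conj:
  assumes U: "U \<in> carrier_mat n n" and d: "d \<in> carrier_mat 1 1" and D: "D \<in> carrier_mat n n"
  shows "four_block_mat (1\<^sub>m 1) (0\<^sub>m 1 n) (0\<^sub>m n 1) U * four_block_mat d (0\<^sub>m 1 n) (0\<^sub>m n 1) D
      * adj (four_block_mat (1\<^sub>m 1) (0\<^sub>m 1 n) (0\<^sub>m n 1) U)
    = four_block_mat d (0\<^sub>m 1 n) (0\<^sub>m n 1) (U * D * adj U)"
proof -
  have c11: "1\<^sub>m 1 \<in> carrier_mat 1 1" and z1: "0\<^sub>m 1 n \<in> carrier_mat 1 n" and z2: "0\<^sub>m n 1 \<in> carrier_mat n 1"
    by auto
  have aU: "adj U \<in> carrier_mat n n" and UD: "U * D \<in> carrier_mat n n" using U D by auto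
  have ED: "four_block_mat (1\<^sub>m 1) (0\<^sub>m 1 n) (0\<^sub>m n 1) U * four_block_mat d (0\<^sub>m 1 n) (0\<^sub>m n 1) D
      = four_block_mat d (0\<^sub>m 1 n) (0\<^sub>m n 1) (U * D)"
    unfolding mult_four_block_mat[OF c11 z1 z2 U d z1 z2 D] using U D d by simp
  show ?thesis
    unfolding ED adj_four_block_one[OF U] mult_four_block_mat[OF d z1 z2 UD c11 z1 z2 aU]
    using U D d left_add_zero_mat[OF mult_carrier_mat[OF UD aU]] by simp
qed

lemma unitary_conj_cancel:
  assumes uW: "unitary n W" and A: "A \<in> carrier_mat n n"
  shows "W * (adj W * A * W) * adj W = A"
proof -
  have W: "W \<in> carrier_mat n n" using uW by (rule unitary_carrier)
  have aW: "adj W \<in> carrier_mat n n" using W by simp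
  have "W * (adj W * A * W) * adj W = W * ((adj W * A * W) * adj W)"
    using W A aW by (intro assoc_mult_mat) auto
  also have "(adj W * A * W) * adj W = (adj W * A) * (W * adj W)"
    using W A aW by (intro assoc_mult_mat) auto
  also have "W * ((adj W * A) * (W * adj W)) = (W * adj W) * A"
    using W A aW unitary_mult_adj[OF uW] by (simp add: assoc_mult_mat[OF W aW A, symmetric])
  finally show ?thesis using unitary_mult_adj[OF uW] A by simp
qed

lemma conj_conj_eq_conj_mult:
  assumes W: "W \<in> carrier_mat n n" and E: "E \<in> carrier_mat n n" and D: "D \<in> carrier_mat n n"
  shows "W * (E * D * adj E) * adj W = (W * E) * D * adj (W * E)"
proof -
  have aW: "adj W \<in> carrier_mat n n" and aE: "adj E \<in> carrier_mat n n" using W E by auto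
  have ED: "E * D \<in> carrier_mat n n" and WED: "W * E * D \<in> carrier_mat n n" using W E D by auto
  have "W * (E * D * adj E) = W * E * D * adj E"
    using assoc_mult_mat[OF W ED aE] assoc_mult_mat[OF W E D] by simp
  then have "W * (E * D * adj E) * adj W = W * E * D * (adj E * adj W)"
    using assoc_mult_mat[OF WED aE aW] by simp
  then show ?thesis using adj_mult[OF W E] by simp
qed

theorem hermitian_spectral_decomposition:
  fixes A :: "complex mat"
  assumes "A \<in> carrier_mat n n" "adj A = A"
  obtains U lam where "unitary n U" "A = U * mat_diag n (\<lambda>i. complex_of_real (lam i)) * adj U"
  using assms
proof (induction n arbitrary: A thesis)
  case 0
  have "unitary 0 (1\<^sub>m 0)" unfolding unitary_def by simp
  moreover have "A = 1\<^sub>m 0 * mat_diag 0 (\<lambda>i. complex_of_real 0) * adj (1\<^sub>m 0)"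
    using 0 by (intro eq_matI) auto
  ultimately show ?case by (rule 0(1))
next
  case (Suc n A)
  obtain e u where u: "u \<in> carrier_vec (Suc n)" "u \<bullet>c u = 1" and Au: "A *\<^sub>v u = e \<cdot>\<^sub>v u"
    using unit_eigenvector_exists[OF Suc.prems(2)] by blast
  obtain W where uW: "unitary (Suc n) W" and W0: "col W 0 = u"
    using unitary_with_first_col[OF u] by blast
  obtain c A3 where A3: "A3 \<in> carrier_mat n n" "adj A3 = A3"
    and A': "adj W * A * W = four_block_mat (mat_diag 1 (\<lambda>_. complex_of_real c)) (0\<^sub>m 1 n) (0\<^sub>m n 1) A3"
    using hermitian_deflation[OF Suc.prems(2,3) uW] Au W0 by blast
  obtain U3 lam3 where uU3: "unitary n U3"
    and A3_eq: "A3 = U3 * mat_diag n (\<lambda>i. complex_of_real (lam3 i)) * adj U3"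
    using Suc.IH[OF _ A3] by blast
  define lam where "lam i = (if i = 0 then c else lam3 (i - 1))" for i
  define E where "E = four_block_mat (1\<^sub>m 1) (0\<^sub>m 1 n) (0\<^sub>m n 1) U3"
  have E: "E \<in> carrier_mat (Suc n) (Suc n)" and uE: "unitary (Suc n) E"
    using unitary_four_block_one[OF uU3] unitary_carrier unfolding E_def by auto
  have W: "W \<in> carrier_mat (Suc n) (Suc n)" using uW by (rule unitary_carrier)
  have D: "mat_diag (Suc n) (\<lambda>i. complex_of_real (lam i))
      = four_block_mat (mat_diag 1 (\<lambda>_. complex_of_real c)) (0\<^sub>m 1 n) (0\<^sub>m n 1)
          (mat_diag n (\<lambda>i. complex_of_real (lam3 i)))"
    unfolding mat_diag_Suc_four_block lam_def by simp
  have "adj W * A * W = E * mat_diag (Suc n) (\<lambda>i. complex_of_real (lam i)) * adj E"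
    unfolding A' E_def A3_eq D
    by (rule four_block_one_conj[symmetric]) (use uU3 unitary_carrier in auto)
  then have "A = W * (E * mat_diag (Suc n) (\<lambda>i. complex_of_real (lam i)) * adj E) * adj W"
    using unitary_conj_cancel[OF uW Suc.prems(2)] by simp
  also have "\<dots> = (W * E) * mat_diag (Suc n) (\<lambda>i. complex_of_real (lam i)) * adj (W * E)"
    by (rule conj_conj_eq_conj_mult[OF W E mat_diag_dim])
  finally show ?case using Suc.prems(1) unitary_mult[OF uW uE] by blast
qed

text \<open>\<open>mat_powr\<close> picks an arbitrary spectral decomposition, but always one of \<open>C\<close> itself,
  so \<open>C\<close> and \<open>mat_powr C p\<close> are diagonalized by the same unitary.\<close>

lemma mat_powr_hermitian:
  assumes C: "C \<in> carrier_mat n n" and hC: "adj C = C"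
  obtains U lam where "unitary n U" "C = U * mat_diag n (\<lambda>i. complex_of_real (lam i)) * adj U"
    "mat_powr C p = U * mat_diag n (\<lambda>i. complex_of_real (lam i powr p)) * adj U"
proof -
  have dr: "dim_row C = n" using C by simp
  obtain U0 lam0 where "unitary n U0" "C = U0 * mat_diag n (\<lambda>i. complex_of_real (lam0 i)) * adj U0"
    using hermitian_spectral_decomposition[OF C hC] by blast
  then have "\<exists>B U lam. unitary (dim_row C) U \<and>
      C = U * mat_diag (dim_row C) (\<lambda>i. complex_of_real (lam i)) * adj U \<and>
      B = U * mat_diag (dim_row C) (\<lambda>i. complex_of_real (lam i powr p)) * adj U"
    unfolding dr by blast
  from someI_ex[OF this] have "\<exists>U lam. unitary (dim_row C) U \<and>
      C = U * mat_diag (dim_row C) (\<lambda>i. complex_of_real (lam i)) * adj U \<and>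
      mat_powr C p = U * mat_diag (dim_row C) (\<lambda>i. complex_of_real (lam i powr p)) * adj U"
    unfolding mat_powr_def .
  then show ?thesis using that unfolding dr by blast
qed

section \<open>Quadratic forms and traces\<close>

definition quad_form :: "complex mat \<Rightarrow> complex vec \<Rightarrow> complex" where
  "quad_form X v = conjugate v \<bullet> (X *\<^sub>v v)"

lemma quad_form_add:
  assumes "X \<in> carrier_mat k k" "Y \<in> carrier_mat k k" "v \<in> carrier_vec k"
  shows "quad_form (X + Y) v = quad_form X v + quad_form Y v"
  unfolding quad_form_def using assms
  by (simp add: add_mult_distrib_mat_vec[of _ k k] scalar_prod_add_distrib[of _ k])

lemma quad_form_smult:
  assumes "X \<in> carrier_mat k k" "v \<in> carrier_vec k"
  shows "quad_form (c \<cdot>\<^sub>m X) v = c * quad_form X v"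
proof -
  have "(c \<cdot>\<^sub>m X) *\<^sub>v v = c \<cdot>\<^sub>v (X *\<^sub>v v)"
    using assms by (intro eq_vecI) (auto simp: scalar_prod_def sum_distrib_left mult.assoc)
  then show ?thesis unfolding quad_form_def using assms by (simp add: scalar_prod_smult_distrib[of _ k])
qed

lemma quad_form_minus:
  assumes "X \<in> carrier_mat k k" "Y \<in> carrier_mat k k" "v \<in> carrier_vec k"
  shows "quad_form (X - Y) v = quad_form X v - quad_form Y v"
proof -
  have "X - Y = X + (-1) \<cdot>\<^sub>m Y" using assms by (intro eq_matI) auto
  then show ?thesis using assms quad_form_add[of X k "(-1) \<cdot>\<^sub>m Y" v] quad_form_smult[of Y k v "-1"] by simp
qed

lemma quad_form_zero: "v \<in> carrier_vec k \<Longrightarrow> quad_form (0\<^sub>m k k) v = 0"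
  unfolding quad_form_def by (simp add: scalar_prod_def)

lemma quad_form_one: "v \<in> carrier_vec k \<Longrightarrow> quad_form (1\<^sub>m k) v = conjugate v \<bullet> v"
  unfolding quad_form_def by simp

lemma scalar_prod_mult_mat_vec_adj:
  assumes U: "U \<in> carrier_mat n n" and v: "v \<in> carrier_vec n" and y: "y \<in> carrier_vec n"
  shows "conjugate v \<bullet> (U *\<^sub>v y) = conjugate (adj U *\<^sub>v v) \<bullet> y"
proof -
  have "conjugate v \<bullet> (U *\<^sub>v y) = (\<Sum>a<n. \<Sum>b<n. cnj (v $ a) * (U $$ (a, b) * y $ b))"
    using U v y by (auto simp: scalar_prod_def sum_distrib_left atLeast0LessThan intro!: sum.cong)
  also have "\<dots> = (\<Sum>b<n. (\<Sum>a<n. cnj (v $ a) * U $$ (a, b)) * y $ b)"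
    by (subst sum.swap) (simp add: sum_distrib_right mult.assoc)
  also have "\<dots> = conjugate (adj U *\<^sub>v v) \<bullet> y"
    using U v y by (auto simp: scalar_prod_def atLeast0LessThan cnj_sum mult.commute intro!: sum.cong)
  finally show ?thesis .
qed

lemma quad_form_conj:
  assumes U: "U \<in> carrier_mat n n" and X: "X \<in> carrier_mat n n" and v: "v \<in> carrier_vec n"
  shows "quad_form (U * X * adj U) v = quad_form X (adj U *\<^sub>v v)"
proof -
  have z: "adj U *\<^sub>v v \<in> carrier_vec n" using mult_mat_vec_carrier[OF adj_carrier[OF U] v] .
  have UX: "U * X \<in> carrier_mat n n" using U X by simp
  have "(U * X * adj U) *\<^sub>v v = U *\<^sub>v (X *\<^sub>v (adj U *\<^sub>v v))"
    using assoc_mult_mat_vec[OF UX adj_carrier[OF U] v] assoc_mult_mat_vec[OF U X z] by simp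
  then show ?thesis
    unfolding quad_form_def using scalar_prod_mult_mat_vec_adj[OF U v] X z by simp
qed

lemma quad_form_mat_diag:
  assumes z: "z \<in> carrier_vec n"
  shows "quad_form (mat_diag n g) z = (\<Sum>i<n. g i * (cnj (z $ i) * z $ i))"
proof -
  have Dz: "(mat_diag n g *\<^sub>v z) $ i = g i * z $ i" if i: "i < n" for i
  proof -
    have "(mat_diag n g *\<^sub>v z) $ i = (\<Sum>l = 0..<n. (if i = l then g l else 0) * z $ l)"
      using z i by (simp add: mat_diag_def scalar_prod_def)
    also have "\<dots> = (\<Sum>l = 0..<n. if i = l then g l * z $ l else 0)" by (rule sum.cong) auto
    finally show ?thesis using i by simp
  qed
  have "quad_form (mat_diag n g) z = (\<Sum>i = 0..<n. cnj (z $ i) * (mat_diag n g *\<^sub>v z) $ i)"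
    unfolding quad_form_def scalar_prod_def using z by (simp add: mat_diag_def)
  also have "\<dots> = (\<Sum>i<n. g i * (cnj (z $ i) * z $ i))"
    by (auto simp: Dz atLeast0LessThan intro!: sum.cong)
  finally show ?thesis .
qed

lemma conj_diag_carrier: "U \<in> carrier_mat n n \<Longrightarrow> U * mat_diag n g * adj U \<in> carrier_mat n n"
  by (metis adj_carrier mat_diag_dim mult_carrier_mat)

lemma quad_form_conj_diag_col:
  assumes uU: "unitary n U" and i: "i < n"
  shows "quad_form (U * mat_diag n f * adj U) (col U i) = f i"
proof -
  have U: "U \<in> carrier_mat n n" using uU by (rule unitary_carrier)
  have "adj U *\<^sub>v col U i = unit_vec n i"
  proof (rule eq_vecI)
    fix j assume "j < dim_vec (unit_vec n i :: complex vec)"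
    then have j: "j < n" by simp
    have "(adj U *\<^sub>v col U i) $ j = conjugate (col U j) \<bullet> col U i"
      using U j row_adj[OF U j] by simp
    then show "(adj U *\<^sub>v col U i) $ j = unit_vec n i $ j"
      using unitary_col_orthonormal[OF uU j i] j i by (simp add: unit_vec_def)
  qed (use U in simp)
  then show ?thesis
    using quad_form_conj[OF U mat_diag_dim, of "col U i"] quad_form_mat_diag[of "unit_vec n i" n f] U i
    by (simp add: unit_vec_def if_distrib[of "\<lambda>x. _ * x"] cong: if_cong)
qed

lemma conj_diag_entry_in_range:
  assumes uU: "unitary n U" and C: "C = U * mat_diag n (\<lambda>i. complex_of_real (lam i)) * adj U"
    and range: "\<forall>v\<in>carrier_vec n. conjugate v \<bullet> v = 1 \<longrightarrow> Re (quad_form C v) \<in> {a..b}"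
    and i: "i < n"
  shows "lam i \<in> {a..b}"
proof -
  have "quad_form C (col U i) = complex_of_real (lam i)"
    unfolding C by (rule quad_form_conj_diag_col[OF uU i])
  moreover have "col U i \<in> carrier_vec n" using unitary_carrier[OF uU] by (auto intro: carrier_vecI)
  ultimately show ?thesis using range unitary_col_orthonormal[OF uU i i] by fastforce
qed

lemma psd_conj_diag:
  assumes U: "U \<in> carrier_mat n n" and g: "\<And>i. i < n \<Longrightarrow> 0 \<le> g i"
  shows "psd (U * mat_diag n (\<lambda>i. complex_of_real (g i)) * adj U)"
proof -
  let ?X = "U * mat_diag n (\<lambda>i. complex_of_real (g i)) * adj U"
  have X: "?X \<in> carrier_mat n n" by (rule conj_diag_carrier[OF U])
  have "adj ?X = ?X" by (rule adj_mult_mult_adj[OF U mat_diag_dim]) simp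
  moreover have "0 \<le> Re (quad_form ?X v)" if v: "v \<in> carrier_vec n" for v
  proof -
    have "Re (quad_form ?X v) = (\<Sum>i<n. g i * Re (cnj ((adj U *\<^sub>v v) $ i) * (adj U *\<^sub>v v) $ i))"
      unfolding quad_form_conj[OF U mat_diag_dim v]
        quad_form_mat_diag[OF mult_mat_vec_carrier[OF adj_carrier[OF U] v]] by (simp add: Re_sum)
    also have "\<dots> \<ge> 0" using g by (intro sum_nonneg mult_nonneg_nonneg) auto
    finally show ?thesis .
  qed
  ultimately show ?thesis using X U unfolding psd_def hermitian_def quad_form_def by simp
qed

lemma conj_add_smult:
  assumes U: "U \<in> carrier_mat n n" and D: "D \<in> carrier_mat n n" and E: "E \<in> carrier_mat n n"
  shows "U * (D + c \<cdot>\<^sub>m E) * adj U = U * D * adj U + c \<cdot>\<^sub>m (U * E * adj U)"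
proof -
  have UD: "U * D \<in> carrier_mat n n" and UE: "U * E \<in> carrier_mat n n" using U D E by auto
  have "U * (D + c \<cdot>\<^sub>m E) = U * D + c \<cdot>\<^sub>m (U * E)"
    using U D E by (simp add: mult_add_distrib_mat[of _ n n] mult_smult_distrib[of _ n n])
  then show ?thesis
    using UD UE adj_carrier[OF U] by (simp add: add_mult_distrib_mat[of _ n n] mult_smult_assoc_mat[of _ n n])
qed

lemma mtrace_mult_comm:
  assumes A: "A \<in> carrier_mat r c" and B: "B \<in> carrier_mat c r"
  shows "mtrace (A * B) = mtrace (B * A)"
proof -
  have "mtrace (A * B) = (\<Sum>i<r. \<Sum>l<c. A $$ (i, l) * B $$ (l, i))"
    unfolding mtrace_def using A B by (auto simp: scalar_prod_def atLeast0LessThan intro!: sum.cong)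
  also have "\<dots> = (\<Sum>l<c. \<Sum>i<r. B $$ (l, i) * A $$ (i, l))" by (subst sum.swap) (simp add: mult.commute)
  also have "\<dots> = mtrace (B * A)"
    unfolding mtrace_def using A B by (auto simp: scalar_prod_def atLeast0LessThan intro!: sum.cong)
  finally show ?thesis .
qed

lemma mtrace_add:
  assumes "X \<in> carrier_mat k k" "Y \<in> carrier_mat k k"
  shows "mtrace (X + Y) = mtrace X + mtrace Y"
  unfolding mtrace_def using assms by (simp add: sum.distrib)

lemma mtrace_eq_sum_quad_form:
  assumes uV: "unitary k V" and X: "X \<in> carrier_mat k k"
  shows "mtrace X = (\<Sum>j<k. quad_form X (col V j))"
proof -
  have V: "V \<in> carrier_mat k k" using uV by (rule unitary_carrier)
  have aV: "adj V \<in> carrier_mat k k" and XV: "X * V \<in> carrier_mat k k" using V X by auto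
  have "mtrace X = mtrace ((X * V) * adj V)"
    using unitary_mult_adj[OF uV] X by (simp add: assoc_mult_mat[OF X V aV])
  also have "\<dots> = mtrace (adj V * X * V)"
    using mtrace_mult_comm[OF XV aV] by (simp add: assoc_mult_mat[OF aV X V])
  also have "\<dots> = (\<Sum>j<k. (adj V * X * V) $$ (j, j))" unfolding mtrace_def using aV X V by simp
  also have "\<dots> = (\<Sum>j<k. quad_form X (col V j))"
    unfolding quad_form_def using adj_mult_mult_index[OF V X] by simp
  finally show ?thesis .
qed

lemma mtrace_conj_diag:
  assumes uV: "unitary k V"
  shows "mtrace (V * mat_diag k g * adj V) = (\<Sum>j<k. g j)"
proof -
  have V: "V \<in> carrier_mat k k" using uV by (rule unitary_carrier)
  have aV: "adj V \<in> carrier_mat k k" and VD: "V * mat_diag k g \<in> carrier_mat k k" using V by auto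
  have "mtrace (V * mat_diag k g * adj V) = mtrace ((adj V * V) * mat_diag k g)"
    using mtrace_mult_comm[OF VD aV] by (simp add: assoc_mult_mat[OF aV V mat_diag_dim])
  also have "\<dots> = (\<Sum>j<k. g j)" using unitary_adj_mult[OF uV] by (simp add: mtrace_def mat_diag_def)
  finally show ?thesis .
qed

lemma quad_form_ge_of_loewner_le:
  fixes v :: "complex vec"
  assumes X: "X \<in> carrier_mat n n" and le: "loewner_le (complex_of_real c \<cdot>\<^sub>m 1\<^sub>m n) X"
    and v: "v \<in> carrier_vec n" "conjugate v \<bullet> v = 1"
  shows "c \<le> Re (quad_form X v)"
proof -
  have C: "complex_of_real c \<cdot>\<^sub>m 1\<^sub>m n \<in> carrier_mat n n" by simp
  have "0 \<le> Re (quad_form (X - complex_of_real c \<cdot>\<^sub>m 1\<^sub>m n) v)"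
    using le v X unfolding loewner_le_def psd_def quad_form_def by auto
  also have "quad_form (X - complex_of_real c \<cdot>\<^sub>m 1\<^sub>m n) v = quad_form X v - complex_of_real c"
    using quad_form_minus[OF X C v(1)] quad_form_smult[OF one_carrier_mat v(1)] quad_form_one[OF v(1)] v(2)
    by simp
  finally show ?thesis by simp
qed

lemma quad_form_le_of_loewner_le:
  fixes v :: "complex vec"
  assumes X: "X \<in> carrier_mat n n" and le: "loewner_le X (complex_of_real c \<cdot>\<^sub>m 1\<^sub>m n)"
    and v: "v \<in> carrier_vec n" "conjugate v \<bullet> v = 1"
  shows "Re (quad_form X v) \<le> c"
proof -
  have C: "complex_of_real c \<cdot>\<^sub>m 1\<^sub>m n \<in> carrier_mat n n" by simp
  have "0 \<le> Re (quad_form (complex_of_real c \<cdot>\<^sub>m 1\<^sub>m n - X) v)"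
    using le v X unfolding loewner_le_def psd_def quad_form_def by auto
  also have "quad_form (complex_of_real c \<cdot>\<^sub>m 1\<^sub>m n - X) v = complex_of_real c - quad_form X v"
    using quad_form_minus[OF C X v(1)] quad_form_smult[OF one_carrier_mat v(1)] quad_form_one[OF v(1)] v(2)
    by simp
  finally show ?thesis by simp
qed

lemma quad_form_range_of_loewner:
  assumes X: "X \<in> carrier_mat n n"
    and lo: "loewner_le (complex_of_real c \<cdot>\<^sub>m 1\<^sub>m n) X" and up: "loewner_le X (complex_of_real d \<cdot>\<^sub>m 1\<^sub>m n)"
  shows "\<forall>v\<in>carrier_vec n. conjugate v \<bullet> v = 1 \<longrightarrow> Re (quad_form X v) \<in> {c..d}"
  using quad_form_ge_of_loewner_le[OF X lo] quad_form_le_of_loewner_le[OF X up] by auto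

section \<open>Unital positive linear maps\<close>

context
  fixes n k :: nat and \<Phi> :: "complex mat \<Rightarrow> complex mat"
  assumes \<Phi>: "unital_positive_linear_map n k \<Phi>"
begin

lemma phi_carrier: "A \<in> carrier_mat n n \<Longrightarrow> \<Phi> A \<in> carrier_mat k k"
  using \<Phi> unfolding unital_positive_linear_map_def by blast

lemma phi_add: "A \<in> carrier_mat n n \<Longrightarrow> B \<in> carrier_mat n n \<Longrightarrow> \<Phi> (A + B) = \<Phi> A + \<Phi> B"
  using \<Phi> unfolding unital_positive_linear_map_def by blast

lemma phi_smult: "A \<in> carrier_mat n n \<Longrightarrow> \<Phi> (c \<cdot>\<^sub>m A) = c \<cdot>\<^sub>m \<Phi> A"
  using \<Phi> unfolding unital_positive_linear_map_def by blast

lemma phi_psd: "A \<in> carrier_mat n n \<Longrightarrow> psd A \<Longrightarrow> psd (\<Phi> A)"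
  using \<Phi> unfolding unital_positive_linear_map_def by blast

lemma phi_one: "\<Phi> (1\<^sub>m n) = 1\<^sub>m k"
  using \<Phi> unfolding unital_positive_linear_map_def by blast

lemma phi_zero: "\<Phi> (0\<^sub>m n n) = 0\<^sub>m k k"
proof -
  have "\<Phi> (0\<^sub>m n n) = \<Phi> (0 \<cdot>\<^sub>m 0\<^sub>m n n)" by simp
  also have "\<dots> = 0 \<cdot>\<^sub>m \<Phi> (0\<^sub>m n n)" by (rule phi_smult) simp
  also have "\<dots> = 0\<^sub>m k k" using phi_carrier[of "0\<^sub>m n n"] by (intro eq_matI) auto
  finally show ?thesis .
qed

lemma quad_form_phi_conj_diag:
  assumes U: "U \<in> carrier_mat n n" and v: "v \<in> carrier_vec k"
  shows "quad_form (\<Phi> (U * mat_diag n g * adj U)) v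
    = (\<Sum>i<n. g i * quad_form (\<Phi> (U * mat_diag n (\<lambda>l. if l = i then 1 else 0) * adj U)) v)"
proof -
  define P where "P i = U * mat_diag n (\<lambda>l. if l = i then 1 else 0) * adj U" for i
  define D where "D m = U * mat_diag n (\<lambda>l. if l < m then g l else 0) * adj U" for m
  have P: "P i \<in> carrier_mat n n" and D: "D m \<in> carrier_mat n n" for i m
    unfolding P_def D_def by (auto intro: conj_diag_carrier[OF U])
  have "quad_form (\<Phi> (D m)) v = (\<Sum>i<m. g i * quad_form (\<Phi> (P i)) v)" for m
  proof (induction m)
    case 0
    have "mat_diag n (\<lambda>l. if l < 0 then g l else 0) = 0\<^sub>m n n" by (intro eq_matI) (auto simp: mat_diag_def)
    then have "D 0 = 0\<^sub>m n n" unfolding D_def using U by simp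
    then show ?case using phi_zero quad_form_zero[OF v] by simp
  next
    case (Suc m)
    have "mat_diag n (\<lambda>l. if l < Suc m then g l else 0)
        = mat_diag n (\<lambda>l. if l < m then g l else 0) + g m \<cdot>\<^sub>m mat_diag n (\<lambda>l. if l = m then 1 else 0)"
      by (intro eq_matI) (auto simp: mat_diag_def less_Suc_eq)
    then have "D (Suc m) = D m + g m \<cdot>\<^sub>m P m"
      unfolding D_def P_def using conj_add_smult[OF U mat_diag_dim mat_diag_dim] by simp
    then have "\<Phi> (D (Suc m)) = \<Phi> (D m) + g m \<cdot>\<^sub>m \<Phi> (P m)"
      using phi_add[OF D, of "g m \<cdot>\<^sub>m P m"] phi_smult[OF P] P by simp
    then show ?case
      using Suc.IH quad_form_add[OF phi_carrier[OF D] smult_carrier_mat[OF phi_carrier[OF P]] v]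
        quad_form_smult[OF phi_carrier[OF P] v] by simp
  qed
  moreover have "mat_diag n (\<lambda>l. if l < n then g l else 0) = mat_diag n g"
    by (intro eq_matI) (auto simp: mat_diag_def)
  ultimately show ?thesis unfolding P_def D_def by (metis (no_types))
qed

lemma phi_conj_diag_weights:
  assumes uU: "unitary n U" and uV: "unitary k V"
  defines "w \<equiv> \<lambda>j i. Re (quad_form (\<Phi> (U * mat_diag n (\<lambda>l. if l = i then 1 else 0) * adj U)) (col V j))"
  shows "\<And>j i. j < k \<Longrightarrow> 0 \<le> w j i"
    and "\<And>j. j < k \<Longrightarrow> (\<Sum>i<n. w j i) = 1"
    and "\<And>j. j < k \<Longrightarrow> Re (quad_form (\<Phi> (U * mat_diag n (\<lambda>i. complex_of_real (g i)) * adj U)) (col V j))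
      = (\<Sum>i<n. w j i * g i)"
proof -
  have U: "U \<in> carrier_mat n n" using uU by (rule unitary_carrier)
  define P where "P i = U * mat_diag n (\<lambda>l. if l = i then 1 else 0) * adj U" for i
  have P: "P i \<in> carrier_mat n n" for i unfolding P_def by (rule conj_diag_carrier[OF U])
  have vj: "col V j \<in> carrier_vec k" "conjugate (col V j) \<bullet> col V j = 1" if "j < k" for j
    using unitary_col_orthonormal[OF uV that that] unitary_carrier[OF uV] by (auto intro: carrier_vecI)
  have decomp: "quad_form (\<Phi> (U * mat_diag n g * adj U)) (col V j) = (\<Sum>i<n. g i * quad_form (\<Phi> (P i)) (col V j))"
    if "j < k" for g j
    unfolding P_def by (rule quad_form_phi_conj_diag[OF U vj(1)[OF that]])
  show "0 \<le> w j i" if "j < k" for j i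
  proof -
    have "(\<lambda>l. if l = i then 1 else (0::complex)) = (\<lambda>l. complex_of_real (if l = i then 1 else 0))"
      by auto
    then have "psd (P i)" unfolding P_def using psd_conj_diag[OF U, of "\<lambda>l. if l = i then 1 else 0"] by simp
    then have "psd (\<Phi> (P i))" by (rule phi_psd[OF P])
    moreover have "dim_row (\<Phi> (P i)) = k" using phi_carrier[OF P[of i]] by simp
    ultimately show ?thesis
      using vj[OF that] unfolding psd_def w_def P_def[symmetric] quad_form_def by auto
  qed
  show "(\<Sum>i<n. w j i) = 1" if j: "j < k" for j
  proof -
    have "U * mat_diag n (\<lambda>_. 1) * adj U = 1\<^sub>m n" using unitary_mult_adj[OF uU] U by simp
    then have "quad_form (\<Phi> (1\<^sub>m n)) (col V j) = (\<Sum>i<n. quad_form (\<Phi> (P i)) (col V j))"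
      using decomp[OF j, of "\<lambda>_. 1"] by simp
    then have "(\<Sum>i<n. quad_form (\<Phi> (P i)) (col V j)) = 1"
      using phi_one quad_form_one[OF vj(1)[OF j]] vj(2)[OF j] by simp
    then show ?thesis unfolding w_def P_def[symmetric] by (metis Re_sum one_complex.simps(1))
  qed
  show "Re (quad_form (\<Phi> (U * mat_diag n (\<lambda>i. complex_of_real (g i)) * adj U)) (col V j))
      = (\<Sum>i<n. w j i * g i)" if j: "j < k" for j
  proof -
    have "quad_form (\<Phi> (U * mat_diag n (\<lambda>i. complex_of_real (g i)) * adj U)) (col V j)
        = (\<Sum>i<n. complex_of_real (g i) * quad_form (\<Phi> (P i)) (col V j))"
      by (rule decomp[OF j])
    then show ?thesis by (simp add: w_def P_def Re_sum mult.commute)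
  qed
qed

lemma trPhi_eq_sum_power_means:
  assumes C: "C \<in> carrier_mat n n" and hC: "adj C = C"
    and range: "\<forall>v\<in>carrier_vec n. conjugate v \<bullet> v = 1 \<longrightarrow> Re (quad_form C v) \<in> {a..b}"
  obtains x w where "\<And>i. i < n \<Longrightarrow> x i \<in> {a..b}" "\<And>j i. j < k \<Longrightarrow> 0 \<le> w j i"
    "\<And>j. j < k \<Longrightarrow> (\<Sum>i<n. w j i) = 1"
    "trPhi \<Phi> C p = (\<Sum>j<k. (\<Sum>i<n. w j i * x i powr p) powr (1 / p))"
    "Re (mtrace (\<Phi> C)) = (\<Sum>j<k. \<Sum>i<n. w j i * x i)"
proof -
  obtain U lam where uU: "unitary n U" and C_eq: "C = U * mat_diag n (\<lambda>i. complex_of_real (lam i)) * adj U"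
    and Cp: "mat_powr C p = U * mat_diag n (\<lambda>i. complex_of_real (lam i powr p)) * adj U"
    by (rule mat_powr_hermitian[OF C hC])
  have U: "U \<in> carrier_mat n n" using uU by (rule unitary_carrier)
  have lam: "lam i \<in> {a..b}" if "i < n" for i
    using conj_diag_entry_in_range[OF uU C_eq range that] .
  define Y where "Y = \<Phi> (mat_powr C p)"
  have Cp_carrier: "mat_powr C p \<in> carrier_mat n n" unfolding Cp by (rule conj_diag_carrier[OF U])
  have Y: "Y \<in> carrier_mat k k" unfolding Y_def by (rule phi_carrier[OF Cp_carrier])
  have "psd (mat_powr C p)" unfolding Cp by (rule psd_conj_diag[OF U]) simp
  then have "psd Y" unfolding Y_def by (rule phi_psd[OF Cp_carrier])
  then have hY: "adj Y = Y" unfolding psd_def hermitian_def by simp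
  obtain V mu where uV: "unitary k V" and Y_eq: "Y = V * mat_diag k (\<lambda>j. complex_of_real (mu j)) * adj V"
    and Yp: "mat_powr Y (1 / p) = V * mat_diag k (\<lambda>j. complex_of_real (mu j powr (1 / p))) * adj V"
    by (rule mat_powr_hermitian[OF Y hY])
  define w where "w j i = Re (quad_form (\<Phi> (U * mat_diag n (\<lambda>l. if l = i then 1 else 0) * adj U)) (col V j))"
    for j i
  note weights = phi_conj_diag_weights[OF uU uV, folded w_def]
  have mu: "mu j = (\<Sum>i<n. w j i * lam i powr p)" if j: "j < k" for j
  proof -
    have "complex_of_real (mu j) = quad_form Y (col V j)"
      unfolding Y_eq by (rule quad_form_conj_diag_col[OF uV j, symmetric])
    then have "mu j = Re (quad_form Y (col V j))" by (metis Re_complex_of_real)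
    then show ?thesis using weights(3)[OF j, of "\<lambda>i. lam i powr p"] unfolding Y_def Cp by simp
  qed
  have "trPhi \<Phi> C p = Re (mtrace (mat_powr Y (1 / p)))" unfolding trPhi_def Y_def ..
  also have "\<dots> = (\<Sum>j<k. mu j powr (1 / p))" unfolding Yp mtrace_conj_diag[OF uV] by (simp add: Re_sum)
  also have "\<dots> = (\<Sum>j<k. (\<Sum>i<n. w j i * lam i powr p) powr (1 / p))" using mu by simp
  finally have tr: "trPhi \<Phi> C p = (\<Sum>j<k. (\<Sum>i<n. w j i * lam i powr p) powr (1 / p))" .
  have "Re (mtrace (\<Phi> C)) = (\<Sum>j<k. Re (quad_form (\<Phi> C) (col V j)))"
    unfolding mtrace_eq_sum_quad_form[OF uV phi_carrier[OF C]] by (simp add: Re_sum)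
  also have "\<dots> = (\<Sum>j<k. \<Sum>i<n. w j i * lam i)"
  proof (rule sum.cong[OF refl])
    fix j assume "j \<in> {..<k}"
    then show "Re (quad_form (\<Phi> C) (col V j)) = (\<Sum>i<n. w j i * lam i)"
      using weights(3)[of j lam] unfolding C_eq by simp
  qed
  finally show ?thesis using that lam weights(1,2) tr by blast
qed

lemma trPhi_kantorovich_bounds:
  fixes a h p :: real
  assumes C: "C \<in> carrier_mat n n" and hC: "adj C = C"
    and range: "\<forall>v\<in>carrier_vec n. conjugate v \<bullet> v = 1 \<longrightarrow> Re (quad_form C v) \<in> {a..a * h}"
    and a: "0 < a" and h: "1 < h"
  defines "T \<equiv> Re (mtrace (\<Phi> C))" and "K \<equiv> kantorovich h p powr (1 / p)"
  shows "p < 0 \<or> 0 < p \<and> p \<le> 1 \<Longrightarrow> K * T \<le> trPhi \<Phi> C p \<and> trPhi \<Phi> C p \<le> T"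
    and "1 \<le> p \<Longrightarrow> T \<le> trPhi \<Phi> C p \<and> trPhi \<Phi> C p \<le> K * T"
proof -
  obtain x w where x: "\<And>i. i < n \<Longrightarrow> x i \<in> {a..a * h}" and w0: "\<And>j i. j < k \<Longrightarrow> 0 \<le> w j i"
    and w1: "\<And>j. j < k \<Longrightarrow> (\<Sum>i<n. w j i) = 1"
    and tr: "trPhi \<Phi> C p = (\<Sum>j<k. (\<Sum>i<n. w j i * x i powr p) powr (1 / p))"
    and T: "T = (\<Sum>j<k. \<Sum>i<n. w j i * x i)"
    using trPhi_eq_sum_power_means[OF C hC range, where p = p] unfolding T_def by blast
  define t where "t j = (\<Sum>i<n. w j i * x i)" for j
  define s where "s j = (\<Sum>i<n. w j i * x i powr p) powr (1 / p)" for j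
  have row: "(p < 0 \<or> 0 < p \<and> p \<le> 1 \<longrightarrow> K * t j \<le> s j \<and> s j \<le> t j) \<and>
      (1 \<le> p \<longrightarrow> t j \<le> s j \<and> s j \<le> K * t j)" if "j < k" for j
    using power_mean_kantorovich_bounds[OF a h, of "{..<n}" x "w j" p] x w0[OF that] w1[OF that]
    unfolding K_def t_def s_def by simp
  have sums: "trPhi \<Phi> C p = (\<Sum>j<k. s j)" "T = (\<Sum>j<k. t j)" "K * T = (\<Sum>j<k. K * t j)"
    unfolding tr T s_def t_def by (simp_all add: sum_distrib_left)
  show "K * T \<le> trPhi \<Phi> C p \<and> trPhi \<Phi> C p \<le> T" if "p < 0 \<or> 0 < p \<and> p \<le> 1"
    unfolding sums using row that by (auto simp: sum_distrib_left intro!: sum_mono)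
  show "T \<le> trPhi \<Phi> C p \<and> trPhi \<Phi> C p \<le> K * T" if "1 \<le> p"
    unfolding sums using row that by (auto simp: sum_distrib_left intro!: sum_mono)
qed

lemma trPhi_add_kantorovich_bounds:
  fixes a h p :: real
  assumes A: "A \<in> carrier_mat n n" and B: "B \<in> carrier_mat n n" and hA: "adj A = A" and hB: "adj B = B"
    and rA: "\<forall>v\<in>carrier_vec n. conjugate v \<bullet> v = 1 \<longrightarrow> Re (quad_form A v) \<in> {a..a * h}"
    and rB: "\<forall>v\<in>carrier_vec n. conjugate v \<bullet> v = 1 \<longrightarrow> Re (quad_form B v) \<in> {a..a * h}"
    and a: "0 < a" and h: "1 < h"
  defines "K \<equiv> kantorovich h p powr (1 / p)" and "s \<equiv> trPhi \<Phi> A p + trPhi \<Phi> B p"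
  shows "p < 0 \<or> 0 < p \<and> p \<le> 1 \<Longrightarrow> K * s \<le> trPhi \<Phi> (A + B) p \<and> trPhi \<Phi> (A + B) p \<le> 1 / K * s"
    and "1 \<le> p \<Longrightarrow> 1 / K * s \<le> trPhi \<Phi> (A + B) p \<and> trPhi \<Phi> (A + B) p \<le> K * s"
proof -
  have AB: "A + B \<in> carrier_mat n n" and a2: "0 < 2 * a" using A B a by auto
  have hAB: "adj (A + B) = A + B" using adj_add[OF A B] hA hB by simp
  have rAB: "\<forall>v\<in>carrier_vec n. conjugate v \<bullet> v = 1 \<longrightarrow> Re (quad_form (A + B) v) \<in> {2 * a..2 * a * h}"
  proof (intro ballI impI)
    fix v :: "complex vec" assume v: "v \<in> carrier_vec n" "conjugate v \<bullet> v = 1"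
    then have "Re (quad_form A v) \<in> {a..a * h}" "Re (quad_form B v) \<in> {a..a * h}" using rA rB by auto
    then show "Re (quad_form (A + B) v) \<in> {2 * a..2 * a * h}" using quad_form_add[OF A B v(1)] by auto
  qed
  define TA TB where "TA = Re (mtrace (\<Phi> A))" and "TB = Re (mtrace (\<Phi> B))"
  have TAB: "Re (mtrace (\<Phi> (A + B))) = TA + TB"
    using phi_add[OF A B] mtrace_add[OF phi_carrier[OF A] phi_carrier[OF B]] unfolding TA_def TB_def by simp
  note bA = trPhi_kantorovich_bounds[OF A hA rA a h, of p, folded K_def TA_def]
  note bB = trPhi_kantorovich_bounds[OF B hB rB a h, of p, folded K_def TB_def]
  note bAB = trPhi_kantorovich_bounds[OF AB hAB rAB a2 h, of p, unfolded TAB, folded K_def]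
  have K: "0 < K" if "p \<noteq> 0" unfolding K_def using kantorovich_pos[OF h that] by simp
  show "K * s \<le> trPhi \<Phi> (A + B) p \<and> trPhi \<Phi> (A + B) p \<le> 1 / K * s" if p: "p < 0 \<or> 0 < p \<and> p \<le> 1"
  proof -
    have "p \<noteq> 0" using p by auto
    then show ?thesis
      using ratio_bounds_add[of K 1 TA "trPhi \<Phi> A p" TB "trPhi \<Phi> B p" "trPhi \<Phi> (A + B) p"]
        K bA(1)[OF p] bB(1)[OF p] bAB(1)[OF p] unfolding s_def by simp
  qed
  show "1 / K * s \<le> trPhi \<Phi> (A + B) p \<and> trPhi \<Phi> (A + B) p \<le> K * s" if p: "1 \<le> p"
  proof -
    have "p \<noteq> 0" using p by auto
    then show ?thesis
      using ratio_bounds_add[of 1 K TA "trPhi \<Phi> A p" TB "trPhi \<Phi> B p" "trPhi \<Phi> (A + B) p"]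
        K bA(2)[OF p] bB(2)[OF p] bAB(2)[OF p] unfolding s_def by simp
  qed
qed

end

theorem theorem4p8:
  fixes n k :: nat and A B :: "complex mat" and \<Phi> :: "complex mat \<Rightarrow> complex mat"
    and m M p :: real
  assumes A: "A \<in> carrier_mat n n" and B: "B \<in> carrier_mat n n"
    and pdA: "pd A" and pdB: "pd B"
    and m: "0 < m" and mM: "m < M"
    and AmI: "loewner_le (complex_of_real m \<cdot>\<^sub>m 1\<^sub>m n) A"
    and AMI: "loewner_le A (complex_of_real M \<cdot>\<^sub>m 1\<^sub>m n)"
    and BmI: "loewner_le (complex_of_real m \<cdot>\<^sub>m 1\<^sub>m n) B"
    and BMI: "loewner_le B (complex_of_real M \<cdot>\<^sub>m 1\<^sub>m n)"
    and Phi: "unital_positive_linear_map n k \<Phi>"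
  shows "((p < 0 \<or> (0 < p \<and> p \<le> 1)) \<longrightarrow>
           kantorovich (M / m) p powr (1 / p) * (trPhi \<Phi> A p + trPhi \<Phi> B p) \<le> trPhi \<Phi> (A + B) p \<and>
           trPhi \<Phi> (A + B) p \<le> kantorovich (M / m) p powr (- 1 / p) * (trPhi \<Phi> A p + trPhi \<Phi> B p)) \<and>
         (1 \<le> p \<longrightarrow>
           kantorovich (M / m) p powr (- 1 / p) * (trPhi \<Phi> A p + trPhi \<Phi> B p) \<le> trPhi \<Phi> (A + B) p \<and>
           trPhi \<Phi> (A + B) p \<le> kantorovich (M / m) p powr (1 / p) * (trPhi \<Phi> A p + trPhi \<Phi> B p))"
proof -
  define h where "h = M / m"
  have h: "1 < h" and mh: "m * h = M" unfolding h_def using m mM by auto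
  have hA: "adj A = A" and hB: "adj B = B" using pdA pdB unfolding pd_def hermitian_def by auto
  have rA: "\<forall>v\<in>carrier_vec n. conjugate v \<bullet> v = 1 \<longrightarrow> Re (quad_form A v) \<in> {m..m * h}"
    using quad_form_range_of_loewner[OF A AmI AMI] mh by simp
  have rB: "\<forall>v\<in>carrier_vec n. conjugate v \<bullet> v = 1 \<longrightarrow> Re (quad_form B v) \<in> {m..m * h}"
    using quad_form_range_of_loewner[OF B BmI BMI] mh by simp
  have "kantorovich h p powr (- 1 / p) = 1 / kantorovich h p powr (1 / p)"
    by (simp add: powr_minus_divide[symmetric])
  then show ?thesis
    using trPhi_add_kantorovich_bounds[OF Phi A B hA hB rA rB m h, of p] unfolding h_def by simp
qed

end
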